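(* Consider $N\ge 2$ agents $x_i(k+1)=Ax_i(k)+Bu_i(k)$, $i=1,\dots,N$, with $x_i\in\mathbb{R}^n$, $u_i\in\mathbb{R}^m$, where all eigenvalues of $A$ lie in the closed unit disc and $(A,B)$ is stabilizable. Let $K$ be any matrix such that $A-BK$ is Schur stable. Each agent $i$ uses the protocol $$\eta_i(k+1)=A\eta_i(k)+Bu_i(k)+A\zeta_i(k)-A\hat\zeta_i(k),\qquad u_i(k)=-K\eta_i(k),$$ with $\zeta_i(k)=\sum_{j=1}^N d_{ij}(x_i(k)-x_j(k))$ and $\hat\zeta_i(k)=\sum_{j=1}^N d_{ij}(\eta_i(k)-\eta_j(k))$. Then for every $N$, every weighted directed graph on $N$ nodes containing a directed spanning tree, and all initial conditions $x_i(0),\eta_i(0)$, state synchronization holds: $\lim_{k\to\infty}(x_i(k)-x_j(k))=0$ for all $i,j$. In particular, the scalable state synchronization problem with localized information exchange (full-state coupling) is solvable by a protocol designed using only $(A,B)$.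
   Context: The network is a weighted directed graph with adjacency matrix $[a_{ij}]$, $a_{ij}\ge0$, $a_{ii}=0$ ($a_{ij}>0$ means an edge from $j$ to $i$); weighted in-degree $d_{in}(i)=\sum_j a_{ij}$. The row stochastic matrix $D=[d_{ij}]$ is given by $d_{ij}=a_{ij}/(1+d_{in}(i))$ for $j\ne i$ and $d_{ii}=1-\sum_{j\neq i}d_{ij}=1/(1+d_{in}(i))$, so that $\zeta_i=\frac{1}{1+d_{in}(i)}\sum_j a_{ij}(x_i-x_j)$. A square matrix is Schur stable if all its eigenvalues lie in the open unit disc. A directed spanning tree is a subgraph containing all nodes in which every node except one root has exactly one parent. *)

theory Defs
  imports "HOL-Analysis.Analysis"
begin

definition cmat :: "real^'n^'n \<Rightarrow> complex^'n^'n" where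
  "cmat A = (\<chi> i j. complex_of_real (A $ i $ j))"

definition is_eigenvalue :: "real^'n^'n \<Rightarrow> complex \<Rightarrow> bool" where
  "is_eigenvalue A c \<longleftrightarrow> (\<exists>v::complex^'n. v \<noteq> 0 \<and> cmat A *v v = c *s v)"

definition schur_stable :: "real^'n^'n \<Rightarrow> bool" where
  "schur_stable A \<longleftrightarrow> (\<forall>c. is_eigenvalue A c \<longrightarrow> norm c < 1)"

definition eigs_in_closed_disc :: "real^'n^'n \<Rightarrow> bool" where
  "eigs_in_closed_disc A \<longleftrightarrow> (\<forall>c. is_eigenvalue A c \<longrightarrow> norm c \<le> 1)"

definition stabilizable :: "real^'n^'n \<Rightarrow> real^'m^'n \<Rightarrow> bool" where
  "stabilizable A B \<longleftrightarrow> (\<exists>F::real^'n^'m. schur_stable (A + B ** F))"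

text \<open>Graph on nodes {0..<N}, adjacency a i j (edge from j to i if a i j > 0).\<close>
definition weighted_graph :: "nat \<Rightarrow> (nat \<Rightarrow> nat \<Rightarrow> real) \<Rightarrow> bool" where
  "weighted_graph N a \<longleftrightarrow> (\<forall>i<N. \<forall>j<N. a i j \<ge> 0) \<and> (\<forall>i<N. a i i = 0)"

text \<open>Directed spanning tree: a root r and a parent map on all other nodes using
  existing edges (parent j of i means edge j -> i, i.e. a i j > 0) such that following
  parents from any node reaches the root (so the parent structure is a tree).\<close>
definition has_spanning_tree :: "nat \<Rightarrow> (nat \<Rightarrow> nat \<Rightarrow> real) \<Rightarrow> bool" where
  "has_spanning_tree N a \<longleftrightarrow>
     (\<exists>r<N. \<exists>par::nat \<Rightarrow> nat.
        (\<forall>i<N. i \<noteq> r \<longrightarrow> par i < N \<and> par i \<noteq> i \<and> a i (par i) > 0) \<and>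
        (\<forall>i<N. \<exists>k. (par ^^ k) i = r))"

definition din :: "nat \<Rightarrow> (nat \<Rightarrow> nat \<Rightarrow> real) \<Rightarrow> nat \<Rightarrow> real" where
  "din N a i = (\<Sum>j<N. a i j)"

definition dmat :: "nat \<Rightarrow> (nat \<Rightarrow> nat \<Rightarrow> real) \<Rightarrow> nat \<Rightarrow> nat \<Rightarrow> real" where
  "dmat N a i j = (if j = i then 1 / (1 + din N a i) else a i j / (1 + din N a i))"

end

(*
  The estimation errors e_i = x_i - eta_i satisfy the autonomous recursion
  e_i(k+1) = A (sum_j d_ij e_j(k)), hence e_i(k) = A^k (sum_l (D^k)_il e_l(0)).
  Since D is row stochastic with positive diagonal and its graph contains a spanning tree,
  some power D^L has its root column bounded below by c > 0, and every further block of L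
  steps shrinks the spread of each column of D^k by the factor 1 - c: the rows of D^k merge
  geometrically. The eigenvalues of A lie in the closed unit disc, so by the Jordan normal form
  the entries of A^k grow at most polynomially, and e_i - e_j tends to 0. Finally x_i - x_j
  evolves under the Schur stable matrix A - BK, driven by the vanishing input BK (e_i - e_j),
  and therefore tends to 0 as well.
*)
theory Submission
  imports Defs Jordan_Normal_Form.Spectral_Radius
begin

no_notation Matrix.vec_index (infixl \<open>$\<close> 100)

section \<open>Powers of row stochastic matrices\<close>

definition row_stochastic :: "nat \<Rightarrow> (nat \<Rightarrow> nat \<Rightarrow> real) \<Rightarrow> bool" where
  "row_stochastic N P \<longleftrightarrow> (\<forall>i<N. \<forall>j<N. 0 \<le> P i j) \<and> (\<forall>i<N. (\<Sum>j<N. P i j) = 1)"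

primrec mat_fun_pow :: "nat \<Rightarrow> (nat \<Rightarrow> nat \<Rightarrow> real) \<Rightarrow> nat \<Rightarrow> nat \<Rightarrow> nat \<Rightarrow> real" where
  "mat_fun_pow N P 0 i l = (if i = l then 1 else 0)"
| "mat_fun_pow N P (Suc k) i l = (\<Sum>j<N. P i j * mat_fun_pow N P k j l)"

lemma row_stochastic_mat_fun_pow:
  assumes P: "row_stochastic N P"
  shows "row_stochastic N (mat_fun_pow N P k)"
proof (induction k)
  case 0
  then show ?case by (simp add: row_stochastic_def)
next
  case (Suc k)
  have "(\<Sum>l<N. mat_fun_pow N P (Suc k) i l) = 1" if i: "i < N" for i
  proof -
    have "(\<Sum>l<N. mat_fun_pow N P (Suc k) i l) = (\<Sum>j<N. \<Sum>l<N. P i j * mat_fun_pow N P k j l)"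
      unfolding mat_fun_pow.simps by (rule sum.swap)
    also have "\<dots> = (\<Sum>j<N. P i j * (\<Sum>l<N. mat_fun_pow N P k j l))"
      by (simp add: sum_distrib_left)
    also have "\<dots> = (\<Sum>j<N. P i j)"
      using Suc.IH by (simp add: row_stochastic_def)
    finally show ?thesis
      using P i by (simp add: row_stochastic_def)
  qed
  then show ?case
    using P Suc.IH by (auto simp: row_stochastic_def intro!: sum_nonneg)
qed

lemma mat_fun_pow_add:
  assumes "i < N"
  shows "mat_fun_pow N P (m + k) i l = (\<Sum>j<N. mat_fun_pow N P m i j * mat_fun_pow N P k j l)"
  using assms
proof (induction m arbitrary: i)
  case 0
  have "(\<Sum>j<N. mat_fun_pow N P 0 i j * mat_fun_pow N P k j l)
      = (\<Sum>j<N. if i = j then mat_fun_pow N P k j l else 0)"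
    by (intro sum.cong) auto
  then show ?case
    using 0 by simp
next
  case (Suc m)
  have "mat_fun_pow N P (Suc m + k) i l
      = (\<Sum>j<N. P i j * (\<Sum>s<N. mat_fun_pow N P m j s * mat_fun_pow N P k s l))"
    using Suc.IH by simp
  also have "\<dots> = (\<Sum>j<N. \<Sum>s<N. P i j * mat_fun_pow N P m j s * mat_fun_pow N P k s l)"
    by (simp add: sum_distrib_left mult.assoc)
  also have "\<dots> = (\<Sum>s<N. (\<Sum>j<N. P i j * mat_fun_pow N P m j s) * mat_fun_pow N P k s l)"
    by (subst sum.swap) (simp add: sum_distrib_right)
  finally show ?case by simp
qed

lemma row_stochastic_le_one:
  assumes "row_stochastic N P" "i < N" "l < N"
  shows "P i l \<le> 1"
  using assms member_le_sum[of l "{..<N}" "P i"] by (simp add: row_stochastic_def)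

lemma convex_comb_shrinks_interval:
  fixes w v :: "nat \<Rightarrow> real"
  assumes w: "\<And>j. j < N \<Longrightarrow> 0 \<le> w j" "(\<Sum>j<N. w j) = 1"
    and v: "\<And>j. j < N \<Longrightarrow> v j \<in> {lo..hi}"
    and r: "r < N" "c \<le> w r"
  shows "(\<Sum>j<N. w j * v j) \<in> {lo + c * (v r - lo) .. hi - c * (hi - v r)}"
proof -
  have "(\<Sum>j<N. w j * v j) = hi - (\<Sum>j<N. w j * (hi - v j))"
    "(\<Sum>j<N. w j * v j) = lo + (\<Sum>j<N. w j * (v j - lo))"
    using w(2) by (simp_all add: right_diff_distrib sum_subtractf sum_distrib_right[symmetric])
  moreover have "w r * (hi - v r) \<le> (\<Sum>j<N. w j * (hi - v j))"
    "w r * (v r - lo) \<le> (\<Sum>j<N. w j * (v j - lo))"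
    using r(1) w(1) v by (intro member_le_sum; force intro: mult_nonneg_nonneg)+
  moreover have "c * (hi - v r) \<le> w r * (hi - v r)" "c * (v r - lo) \<le> w r * (v r - lo)"
    using r v[OF r(1)] by (intro mult_right_mono; simp)+
  ultimately show ?thesis by simp
qed

lemma mat_fun_pow_diag_ge:
  assumes P: "row_stochastic N P" and r: "r < N" and \<delta>: "0 \<le> \<delta>" "\<delta> \<le> P r r"
  shows "\<delta> ^ k \<le> mat_fun_pow N P k r r"
proof (induction k)
  case 0
  then show ?case by simp
next
  case (Suc k)
  have "\<delta> * \<delta> ^ k \<le> P r r * mat_fun_pow N P k r r"
    using Suc \<delta> by (intro mult_mono) auto
  also have "\<dots> \<le> mat_fun_pow N P (Suc k) r r"
    using P row_stochastic_mat_fun_pow[OF P, of k] r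
    by (simp, intro member_le_sum[of r "{..<N}"]) (auto simp: row_stochastic_def intro!: mult_nonneg_nonneg)
  finally show ?case by simp
qed

text \<open>A path of length \<open>m \<le> k\<close> to the root, padded with \<open>k - m\<close> self-loops, carries weight
  at least \<open>\<delta> ^ k\<close>.\<close>
lemma mat_fun_pow_path_ge:
  assumes P: "row_stochastic N P" and r: "r < N" and \<delta>: "0 \<le> \<delta>"
    and diag: "\<And>i. i < N \<Longrightarrow> \<delta> \<le> P i i"
    and par: "\<And>i. i < N \<Longrightarrow> i \<noteq> r \<Longrightarrow> par i < N \<and> \<delta> \<le> P i (par i)"
  shows "i < N \<Longrightarrow> (par ^^ m) i = r \<Longrightarrow> m \<le> k \<Longrightarrow> \<delta> ^ k \<le> mat_fun_pow N P k i r"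
proof (induction m arbitrary: i k)
  case 0
  then show ?case using mat_fun_pow_diag_ge[OF P r \<delta> diag[OF r]] by simp
next
  case (Suc m)
  show ?case
  proof (cases "i = r")
    case True
    then show ?thesis using mat_fun_pow_diag_ge[OF P r \<delta> diag[OF r]] by simp
  next
    case False
    obtain k' where k: "k = Suc k'" "m \<le> k'"
      using Suc.prems(3) by (cases k) auto
    have p: "par i < N" "\<delta> \<le> P i (par i)"
      using par[OF Suc.prems(1) False] by auto
    have "(par ^^ m) (par i) = r"
      using Suc.prems(2) by (simp add: funpow_Suc_right del: funpow.simps)
    then have "\<delta> ^ k' \<le> mat_fun_pow N P k' (par i) r"
      using Suc.IH p(1) k(2) by blast
    then have "\<delta> * \<delta> ^ k' \<le> P i (par i) * mat_fun_pow N P k' (par i) r"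
      using p \<delta> by (intro mult_mono) auto
    also have "\<dots> \<le> mat_fun_pow N P (Suc k') i r"
      using P row_stochastic_mat_fun_pow[OF P, of k'] p(1) Suc.prems(1) r
      by (simp, intro member_le_sum[of "par i" "{..<N}"]) (auto simp: row_stochastic_def intro!: mult_nonneg_nonneg)
    finally show ?thesis using k by simp
  qed
qed

lemma spanning_tree_root_column_ge:
  assumes P: "row_stochastic N P" and diag: "\<And>i. i < N \<Longrightarrow> 0 < P i i" and r: "r < N"
    and par: "\<And>i. i < N \<Longrightarrow> i \<noteq> r \<Longrightarrow> par i < N \<and> 0 < P i (par i)"
    and reach: "\<And>i. i < N \<Longrightarrow> \<exists>k. (par ^^ k) i = r"
  shows "\<exists>L c. 0 < L \<and> 0 < c \<and> (\<forall>i<N. c \<le> mat_fun_pow N P L i r)"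
proof -
  define S where "S = (\<lambda>i. P i i) ` {..<N} \<union> (\<lambda>i. P i (par i)) ` {i. i < N \<and> i \<noteq> r}"
  define \<delta> where "\<delta> = Min S"
  have S: "finite S" "S \<noteq> {}" "\<forall>s\<in>S. 0 < s"
    using r diag par by (auto simp: S_def)
  then have \<delta>: "0 < \<delta>"
    by (simp add: \<delta>_def)
  have diag_ge: "\<delta> \<le> P i i" if "i < N" for i
    using S(1) that by (auto simp: \<delta>_def S_def)
  have par_ge: "par i < N \<and> \<delta> \<le> P i (par i)" if "i < N" "i \<noteq> r" for i
    using S(1) that par by (auto simp: \<delta>_def S_def)
  obtain m where m: "\<And>i. i < N \<Longrightarrow> (par ^^ m i) i = r"
    using reach by metis
  define L where "L = Suc (\<Sum>i<N. m i)"
  have "m i \<le> L" if "i < N" for i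
    using member_le_sum[of i "{..<N}" m] that by (simp add: L_def)
  then have "\<delta> ^ L \<le> mat_fun_pow N P L i r" if "i < N" for i
    using mat_fun_pow_path_ge[OF P r less_imp_le[OF \<delta>] diag_ge par_ge that m[OF that]] that
    by blast
  moreover have "0 < \<delta> ^ L"
    using \<delta> by simp
  ultimately show ?thesis
    by (intro exI[of _ L] exI[of _ "\<delta> ^ L"]) (simp add: L_def)
qed

lemma mat_fun_pow_column_spread:
  assumes P: "row_stochastic N P" and r: "r < N"
    and root: "\<And>i. i < N \<Longrightarrow> c \<le> mat_fun_pow N P L i r"
  shows "\<exists>lo hi. hi - lo \<le> (1 - c) ^ t \<and> (\<forall>j<N. mat_fun_pow N P (t * L) j l \<in> {lo..hi})"
proof (induction t)
  case 0
  show ?case by (intro exI[of _ 0] exI[of _ 1]) simp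
next
  case (Suc t)
  then obtain lo hi where spread: "hi - lo \<le> (1 - c) ^ t"
    and col: "\<And>j. j < N \<Longrightarrow> mat_fun_pow N P (t * L) j l \<in> {lo..hi}"
    by blast
  define v where "v = mat_fun_pow N P (t * L) r l"
  have "c \<le> 1"
    using root[OF r] row_stochastic_le_one[OF row_stochastic_mat_fun_pow[OF P, of L] r r] by simp
  have "mat_fun_pow N P (Suc t * L) j l \<in> {lo + c * (v - lo) .. hi - c * (hi - v)}" if j: "j < N" for j
  proof -
    have "mat_fun_pow N P (Suc t * L) j l
        = (\<Sum>s<N. mat_fun_pow N P L j s * mat_fun_pow N P (t * L) s l)"
      using mat_fun_pow_add[OF j, of P L "t * L" l] by (simp add: add.commute)
    moreover have w: "\<And>s. s < N \<Longrightarrow> 0 \<le> mat_fun_pow N P L j s"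
      "(\<Sum>s<N. mat_fun_pow N P L j s) = 1"
      using row_stochastic_mat_fun_pow[OF P, of L] j by (auto simp: row_stochastic_def)
    ultimately show ?thesis
      unfolding v_def using convex_comb_shrinks_interval[OF w col r root[OF j]] by simp
  qed
  moreover have "(hi - c * (hi - v)) - (lo + c * (v - lo)) = (1 - c) * (hi - lo)"
    by (simp add: algebra_simps)
  moreover have "(1 - c) * (hi - lo) \<le> (1 - c) ^ Suc t"
    using spread \<open>c \<le> 1\<close> by (simp add: mult_left_mono)
  ultimately show ?case
    by (intro exI[of _ "lo + c * (v - lo)"] exI[of _ "hi - c * (hi - v)"]) auto
qed

lemma mat_fun_pow_rows_close:
  assumes P: "row_stochastic N P" and r: "r < N"
    and root: "\<And>i. i < N \<Longrightarrow> c \<le> mat_fun_pow N P L i r"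
    and ij: "i < N" "j < N"
  shows "\<bar>mat_fun_pow N P k i l - mat_fun_pow N P k j l\<bar> \<le> (1 - c) ^ (k div L)"
proof -
  obtain lo hi where spread: "hi - lo \<le> (1 - c) ^ (k div L)"
    and col: "\<And>s. s < N \<Longrightarrow> mat_fun_pow N P (k div L * L) s l \<in> {lo..hi}"
    using mat_fun_pow_column_spread[OF P r root] by blast
  have "mat_fun_pow N P k s l \<in> {lo..hi}" if s: "s < N" for s
  proof -
    have "mat_fun_pow N P k s l
        = (\<Sum>t<N. mat_fun_pow N P (k mod L) s t * mat_fun_pow N P (k div L * L) t l)"
      using mat_fun_pow_add[OF s, of P "k mod L" "k div L * L" l] by simp
    moreover have w: "\<And>t. t < N \<Longrightarrow> 0 \<le> mat_fun_pow N P (k mod L) s t"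
      "(\<Sum>t<N. mat_fun_pow N P (k mod L) s t) = 1"
      using row_stochastic_mat_fun_pow[OF P, of "k mod L"] s by (auto simp: row_stochastic_def)
    ultimately show ?thesis
      using convex_comb_shrinks_interval[OF w col r w(1)[OF r]] by simp
  qed
  then have "lo \<le> mat_fun_pow N P k i l" "mat_fun_pow N P k i l \<le> hi"
    "lo \<le> mat_fun_pow N P k j l" "mat_fun_pow N P k j l \<le> hi"
    using ij by auto
  then show ?thesis
    using spread by arith
qed

lemma power_div_le_geometric:
  fixes q :: real
  assumes q: "0 \<le> q" "q < 1" and L: "0 < L"
  obtains C g where "0 \<le> g" "g < 1" "\<And>k. q ^ (k div L) \<le> C * g ^ k"
proof -
  define q' where "q' = max q (1/2)"
  have q': "0 < q'" "q' < 1" "q \<le> q'"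
    using q by (auto simp: q'_def)
  define g where "g = root L q'"
  have g: "0 \<le> g" "g < 1" "g ^ L = q'"
    using q' L by (auto simp: g_def real_root_pow_pos2 real_root_lt_1_iff)
  have "q ^ (k div L) \<le> 1 / q' * g ^ k" for k
  proof -
    have "k mod L < L"
      using L by simp
    then have k: "k \<le> L * (k div L) + L"
      using mult_div_mod_eq[of L k] by linarith
    have "q ^ (k div L) * q' \<le> g ^ (L * (k div L)) * q'"
      using q q' g by (intro mult_right_mono) (simp_all add: power_mono power_mult)
    also have "\<dots> = g ^ (L * (k div L) + L)"
      using g by (simp add: power_add)
    also have "\<dots> \<le> g ^ k"
      using g k by (intro power_decreasing) auto
    finally show ?thesis
      using q' by (simp add: pos_le_divide_eq mult.commute)
  qed
  then show ?thesis
    using that g(1,2) by blast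
qed

text \<open>Rows of the powers of a stochastic matrix with positive diagonal and a spanning tree merge
  geometrically: the root column of some power is bounded below, and each further block of that
  length contracts the spread of every column.\<close>
lemma mat_fun_pow_consensus:
  assumes P: "row_stochastic N P" and diag: "\<And>i. i < N \<Longrightarrow> 0 < P i i"
    and tree: "has_spanning_tree N P"
  shows "\<exists>C g. 0 \<le> g \<and> g < 1 \<and> (\<forall>k i j l. i < N \<longrightarrow> j < N \<longrightarrow>
    \<bar>mat_fun_pow N P k i l - mat_fun_pow N P k j l\<bar> \<le> C * g ^ k)"
proof -
  obtain r par where r: "r < N"
    and par: "\<And>i. i < N \<Longrightarrow> i \<noteq> r \<Longrightarrow> par i < N \<and> 0 < P i (par i)"
    and reach: "\<And>i. i < N \<Longrightarrow> \<exists>k. (par ^^ k) i = r"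
    using tree unfolding has_spanning_tree_def by blast
  obtain L c where L: "0 < L" and c: "0 < c" and root: "\<And>i. i < N \<Longrightarrow> c \<le> mat_fun_pow N P L i r"
    using spanning_tree_root_column_ge[OF P diag r par reach] by blast
  have "c \<le> 1"
    using root[OF r] row_stochastic_le_one[OF row_stochastic_mat_fun_pow[OF P, of L] r r] by simp
  then have "0 \<le> 1 - c" "1 - c < 1"
    using c by simp_all
  then obtain C g where g: "0 \<le> g" "g < 1" and bound: "\<And>k. (1 - c) ^ (k div L) \<le> C * g ^ k"
    using power_div_le_geometric[OF _ _ L] by blast
  have "\<bar>mat_fun_pow N P k i l - mat_fun_pow N P k j l\<bar> \<le> C * g ^ k"
    if ij: "i < N" "j < N" for k i j l
  proof -
    have "\<bar>mat_fun_pow N P k i l - mat_fun_pow N P k j l\<bar> \<le> (1 - c) ^ (k div L)"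
      by (rule mat_fun_pow_rows_close[OF P r _ ij]) (rule root)
    then show ?thesis
      using bound[of k] by (rule order_trans)
  qed
  then show ?thesis
    using g by blast
qed

section \<open>The normalized adjacency matrix\<close>

lemma din_nonneg: "weighted_graph N a \<Longrightarrow> i < N \<Longrightarrow> 0 \<le> din N a i"
  unfolding weighted_graph_def din_def by (auto intro: sum_nonneg)

lemma dmat_nonneg: "weighted_graph N a \<Longrightarrow> i < N \<Longrightarrow> j < N \<Longrightarrow> 0 \<le> dmat N a i j"
  using din_nonneg[of N a i] unfolding dmat_def weighted_graph_def by (auto intro!: divide_nonneg_pos)

lemma row_stochastic_dmat:
  assumes a: "weighted_graph N a"
  shows "row_stochastic N (dmat N a)"
proof -
  have "(\<Sum>j<N. dmat N a i j) = 1" if i: "i < N" for i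
  proof -
    have "(\<Sum>j<N. dmat N a i j) = (\<Sum>j<N. a i j + (if j = i then 1 else 0)) / (1 + din N a i)"
      using a i unfolding dmat_def weighted_graph_def sum_divide_distrib by (intro sum.cong) auto
    also have "\<dots> = 1"
      using din_nonneg[OF a i] i by (simp add: sum.distrib din_def)
    finally show ?thesis .
  qed
  then show ?thesis
    unfolding row_stochastic_def using dmat_nonneg[OF a] by blast
qed

lemma dmat_diag_pos: "weighted_graph N a \<Longrightarrow> i < N \<Longrightarrow> 0 < dmat N a i i"
  using din_nonneg[of N a i] by (simp add: dmat_def)

lemma has_spanning_tree_dmat:
  assumes a: "weighted_graph N a" and tree: "has_spanning_tree N a"
  shows "has_spanning_tree N (dmat N a)"
proof -
  obtain r par where r: "r < N"
    and par: "\<And>i. i < N \<Longrightarrow> i \<noteq> r \<Longrightarrow> par i < N \<and> par i \<noteq> i \<and> 0 < a i (par i)"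
    and reach: "\<And>i. i < N \<Longrightarrow> \<exists>k. (par ^^ k) i = r"
    using tree unfolding has_spanning_tree_def by blast
  have "0 < dmat N a i (par i)" if "i < N" "i \<noteq> r" for i
    using par[OF that] din_nonneg[OF a that(1)] by (simp add: dmat_def)
  then show ?thesis
    unfolding has_spanning_tree_def using r par reach by blast
qed

section \<open>Powers of Cartesian matrices\<close>

primrec matrix_pow :: "real^'n^'n \<Rightarrow> nat \<Rightarrow> real^'n^'n" where
  "matrix_pow M 0 = Finite_Cartesian_Product.mat 1"
| "matrix_pow M (Suc k) = matrix_pow M k ** M"

lemma matrix_pow_Suc_left: "matrix_pow M (Suc k) = M ** matrix_pow M k"
proof (induction k)
  case 0
  then show ?case by simp
next
  case (Suc k)
  have "matrix_pow M (Suc (Suc k)) = (M ** matrix_pow M k) ** M"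
    using Suc by simp
  then show ?case
    by (simp add: matrix_mul_assoc)
qed

lemma matrix_pow_scaleR: "matrix_pow (s *\<^sub>R M) k = s ^ k *\<^sub>R matrix_pow M k"
  by (induction k) (simp_all add: matrix_scalar_ac scalar_matrix_assoc[symmetric] mult.commute)

lemma matrix_vector_mult_sum: "(M :: real^'n^'m) *v sum f S = (\<Sum>x\<in>S. M *v f x)"
  by (rule linear_sum[OF matrix_vector_mul_linear])

lemma norm_matrix_vector_le:
  assumes "\<And>a b. \<bar>(M :: real^'n^'m) $ a $ b\<bar> \<le> \<beta>"
  shows "norm (M *v v) \<le> real CARD('m) * real CARD('n) * \<beta> * norm v"
  using onorm[OF matrix_vector_mul_bounded_linear, of M v] onorm_le_matrix_component[OF assms]
  by (meson mult_right_mono norm_ge_zero order_trans)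

text \<open>An arbitrary enumeration of a finite index type; it transfers Cartesian matrices to the
  index-based matrices of the Jordan normal form library.\<close>
definition index_of_nat :: "nat \<Rightarrow> 'n::finite" where
  "index_of_nat = (SOME h. bij_betw h {..<CARD('n)} UNIV)"

definition nat_of_index :: "'n::finite \<Rightarrow> nat" where
  "nat_of_index = inv_into {..<CARD('n)} index_of_nat"

lemma bij_betw_index_of_nat: "bij_betw (index_of_nat :: nat \<Rightarrow> 'n::finite) {..<CARD('n)} UNIV"
proof -
  have "\<exists>h. bij_betw h {..<CARD('n)} (UNIV :: 'n set)"
    using ex_bij_betw_nat_finite[of "UNIV :: 'n set"] by (simp add: lessThan_atLeast0)
  then show ?thesis
    unfolding index_of_nat_def by (rule someI_ex)
qed

lemma nat_of_index_less: "nat_of_index (a :: 'n::finite) < CARD('n)"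
  using bij_betw_index_of_nat[where 'n = 'n] unfolding nat_of_index_def
  by (metis UNIV_I bij_betw_def inv_into_into lessThan_iff)

lemma index_of_nat_of_index [simp]: "index_of_nat (nat_of_index (a :: 'n::finite)) = a"
  using bij_betw_index_of_nat[where 'n = 'n] unfolding nat_of_index_def
  by (metis UNIV_I bij_betw_def f_inv_into_f)

lemma nat_of_index_of_nat [simp]: "i < CARD('n::finite) \<Longrightarrow> nat_of_index (index_of_nat i :: 'n) = i"
  using bij_betw_index_of_nat[where 'n = 'n] unfolding nat_of_index_def
  by (meson bij_betw_inv_into_left lessThan_iff)

lemma sum_UNIV_index_of_nat: "sum f (UNIV :: 'n::finite set) = (\<Sum>i<CARD('n). f (index_of_nat i))"
  using sum.reindex_bij_betw[OF bij_betw_index_of_nat[where 'n = 'n], of f] by simp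

definition jnf_of :: "real^'n^'n \<Rightarrow> complex mat" where
  "jnf_of M = Matrix.mat CARD('n) CARD('n)
     (\<lambda>(i, j). complex_of_real (M $ index_of_nat i $ index_of_nat j))"

definition jnf_vec_of :: "complex^'n \<Rightarrow> complex Matrix.vec" where
  "jnf_vec_of v = Matrix.vec CARD('n) (\<lambda>i. v $ index_of_nat i)"

lemma jnf_of_carrier: "jnf_of (M :: real^'n^'n) \<in> carrier_mat CARD('n) CARD('n)"
  by (simp add: jnf_of_def)

lemma dim_jnf_of [simp]:
  "dim_row (jnf_of (M :: real^'n^'n)) = CARD('n)" "dim_col (jnf_of M) = CARD('n)"
  by (simp_all add: jnf_of_def)

lemma jnf_of_mult: "jnf_of ((M :: real^'n^'n) ** M') = jnf_of M * jnf_of M'"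
  by (rule eq_matI)
    (simp_all add: jnf_of_def scalar_prod_def matrix_matrix_mult_def sum_UNIV_index_of_nat
      lessThan_atLeast0)

lemma jnf_of_one: "jnf_of (Finite_Cartesian_Product.mat 1 :: real^'n^'n) = 1\<^sub>m CARD('n)"
proof (rule eq_matI)
  fix i j assume "i < dim_row (1\<^sub>m CARD('n))" "j < dim_col (1\<^sub>m CARD('n))"
  then have ij: "i < CARD('n)" "j < CARD('n)"
    by simp_all
  then have "(index_of_nat i = (index_of_nat j :: 'n)) = (i = j)"
    by (metis nat_of_index_of_nat)
  then show "jnf_of (Finite_Cartesian_Product.mat 1 :: real^'n^'n) $$ (i, j) = 1\<^sub>m CARD('n) $$ (i, j)"
    using ij by (simp add: jnf_of_def Finite_Cartesian_Product.mat_def)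
qed simp_all

lemma jnf_of_matrix_pow: "jnf_of (matrix_pow M k) = jnf_of M ^\<^sub>m k"
  by (induction k) (simp_all add: jnf_of_one jnf_of_mult)

lemma jnf_vec_of_carrier: "jnf_vec_of (v :: complex^'n) \<in> carrier_vec CARD('n)"
  by (simp add: jnf_vec_of_def)

lemma jnf_vec_of_inject: "jnf_vec_of v = jnf_vec_of w \<longleftrightarrow> v = (w :: complex^'n)"
proof
  assume vw: "jnf_vec_of v = jnf_vec_of w"
  have "v $ a = w $ a" for a
    using arg_cong[OF vw, of "\<lambda>u. vec_index u (nat_of_index a)"] nat_of_index_less[of a]
    by (simp add: jnf_vec_of_def)
  then show "v = w"
    by (simp add: Finite_Cartesian_Product.vec_eq_iff)
qed simp

lemma jnf_vec_of_zero: "jnf_vec_of (0 :: complex^'n) = 0\<^sub>v CARD('n)"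
  by (rule eq_vecI) (simp_all add: jnf_vec_of_def)

lemma jnf_vec_of_scale: "jnf_vec_of (c *s v) = c \<cdot>\<^sub>v jnf_vec_of v"
  by (rule eq_vecI) (simp_all add: jnf_vec_of_def)

lemma jnf_vec_of_surj:
  "v \<in> carrier_vec CARD('n) \<Longrightarrow> jnf_vec_of (\<chi> a :: 'n::finite. vec_index v (nat_of_index a)) = v"
  by (rule eq_vecI) (simp_all add: jnf_vec_of_def)

lemma jnf_of_mult_vec: "jnf_of M *\<^sub>v jnf_vec_of v = jnf_vec_of (cmat M *v v)"
  by (rule eq_vecI)
    (simp_all add: jnf_of_def jnf_vec_of_def scalar_prod_def matrix_vector_mult_def cmat_def
      sum_UNIV_index_of_nat lessThan_atLeast0)

lemma is_eigenvalue_iff_eigenvalue_jnf: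
  "is_eigenvalue (M :: real^'n^'n) c \<longleftrightarrow> eigenvalue (jnf_of M) c"
proof
  assume "is_eigenvalue M c"
  then obtain w where "w \<noteq> 0" "cmat M *v w = c *s w"
    unfolding is_eigenvalue_def by blast
  then show "eigenvalue (jnf_of M) c"
    unfolding eigenvalue_def eigenvector_def
    by (intro exI[of _ "jnf_vec_of w"])
      (simp add: jnf_vec_of_carrier jnf_of_mult_vec jnf_vec_of_inject
        flip: jnf_vec_of_zero jnf_vec_of_scale)
next
  assume "eigenvalue (jnf_of M) c"
  then obtain v where v: "v \<in> carrier_vec CARD('n)" "v \<noteq> 0\<^sub>v CARD('n)" "jnf_of M *\<^sub>v v = c \<cdot>\<^sub>v v"
    unfolding eigenvalue_def eigenvector_def by auto
  define w :: "complex^'n" where "w = (\<chi> a. vec_index v (nat_of_index a))"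
  have v_w: "v = jnf_vec_of w"
    using v(1) by (simp add: w_def jnf_vec_of_surj)
  have "w \<noteq> 0" "cmat M *v w = c *s w"
    using v(2,3) unfolding v_w
    by (simp_all add: jnf_of_mult_vec jnf_vec_of_inject flip: jnf_vec_of_zero jnf_vec_of_scale)
  then show "is_eigenvalue M c"
    unfolding is_eigenvalue_def by blast
qed

lemma spectral_radius_jnf_of:
  obtains c where "is_eigenvalue (M :: real^'n^'n) c" "spectral_radius (jnf_of M) = norm c"
  using spectral_radius_mem_max(1)[OF jnf_of_carrier[of M]]
  by (auto simp: spectrum_def is_eigenvalue_iff_eigenvalue_jnf)

lemma norm_eigenvalue_le_spectral_radius:
  "is_eigenvalue (M :: real^'n^'n) c \<Longrightarrow> norm c \<le> spectral_radius (jnf_of M)"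
  using spectral_radius_mem_max(2)[OF jnf_of_carrier[of M]]
  by (simp add: spectrum_def is_eigenvalue_iff_eigenvalue_jnf)

lemma abs_matrix_pow_le:
  assumes "norm_bound (jnf_of M ^\<^sub>m k) \<beta>"
  shows "\<bar>matrix_pow (M :: real^'n^'n) k $ a $ b\<bar> \<le> \<beta>"
proof -
  have "norm (jnf_of (matrix_pow M k) $$ (nat_of_index a, nat_of_index b)) \<le> \<beta>"
    using assms nat_of_index_less[of a] nat_of_index_less[of b]
    unfolding norm_bound_def jnf_of_matrix_pow[symmetric] by simp
  then show ?thesis
    using nat_of_index_less[of a] nat_of_index_less[of b] by (simp add: jnf_of_def)
qed

lemma matrix_pow_poly_bound:
  assumes "eigs_in_closed_disc (M :: real^'n^'n)"
  shows "\<exists>c1 c2 d. \<forall>k a b. \<bar>matrix_pow M k $ a $ b\<bar> \<le> c1 + c2 * real k ^ d"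
proof -
  obtain c where "is_eigenvalue M c" "spectral_radius (jnf_of M) = norm c"
    by (rule spectral_radius_jnf_of)
  then have "spectral_radius (jnf_of M) \<le> 1"
    using assms by (simp add: eigs_in_closed_disc_def)
  then obtain c1 c2 where "\<forall>k. norm_bound (jnf_of M ^\<^sub>m k) (c1 + c2 * of_nat k ^ (CARD('n) - 1))"
    using spectral_radius_jnf_norm_bound_le_1_upper_triangular[OF jnf_of_carrier] by blast
  then show ?thesis
    using abs_matrix_pow_le by blast
qed

lemma matrix_pow_bounded:
  assumes "schur_stable (M :: real^'n^'n)"
  obtains C where "\<And>k a b. \<bar>matrix_pow M k $ a $ b\<bar> \<le> C"
proof -
  obtain c where "is_eigenvalue M c" "spectral_radius (jnf_of M) = norm c"
    by (rule spectral_radius_jnf_of)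
  then have "spectral_radius (jnf_of M) < 1"
    using assms by (simp add: schur_stable_def)
  then obtain C where "\<forall>k. norm_bound (jnf_of M ^\<^sub>m k) C"
    using spectral_radius_jnf_norm_bound_less_1_upper_triangular[OF jnf_of_carrier] by blast
  then show ?thesis
    using that abs_matrix_pow_le by blast
qed

lemma is_eigenvalue_scaleR:
  assumes "is_eigenvalue (s *\<^sub>R M) c" "s \<noteq> 0"
  shows "is_eigenvalue M (c / complex_of_real s)"
proof -
  obtain v where v: "v \<noteq> 0" "cmat (s *\<^sub>R M) *v v = c *s v"
    using assms(1) unfolding is_eigenvalue_def by blast
  have "cmat (s *\<^sub>R M) *v v = complex_of_real s *s (cmat M *v v)"
    by (simp add: Finite_Cartesian_Product.vec_eq_iff matrix_vector_mult_def cmat_def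
        sum_distrib_left mult.assoc)
  then have "cmat M *v v = (c / complex_of_real s) *s v"
    using v(2) assms(2) by (simp add: Finite_Cartesian_Product.vec_eq_iff field_simps)
  then show ?thesis
    using v(1) unfolding is_eigenvalue_def by blast
qed

text \<open>Rescaling by a radius strictly between the spectral radius and 1 keeps the matrix Schur
  stable, so the constant bound on its powers becomes a geometric one.\<close>
lemma schur_stable_matrix_pow_decay:
  assumes F: "schur_stable (F :: real^'n^'n)"
  shows "\<exists>C r. 0 < r \<and> r < 1 \<and> (\<forall>k a b. \<bar>matrix_pow F k $ a $ b\<bar> \<le> C * r ^ k)"
proof -
  define \<rho> where "\<rho> = spectral_radius (jnf_of F)"
  obtain c where "is_eigenvalue F c" "\<rho> = norm c"
    unfolding \<rho>_def by (rule spectral_radius_jnf_of)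
  then have \<rho>: "0 \<le> \<rho>" "\<rho> < 1"
    using F by (auto simp: schur_stable_def)
  define r where "r = (1 + \<rho>) / 2"
  have r: "0 < r" "r < 1" "\<rho> < r"
    using \<rho> by (auto simp: r_def)
  have "schur_stable ((1 / r) *\<^sub>R F)"
    unfolding schur_stable_def
  proof (intro allI impI)
    fix c assume "is_eigenvalue ((1 / r) *\<^sub>R F) c"
    then have "norm (c / complex_of_real (1 / r)) \<le> \<rho>"
      using is_eigenvalue_scaleR[of "1 / r" F c] r norm_eigenvalue_le_spectral_radius
      unfolding \<rho>_def by auto
    then have "norm c * r \<le> \<rho>"
      using r by (simp add: norm_mult)
    then have "norm c * r < 1 * r"
      using r(3) by linarith
    then show "norm c < 1"
      using r(1) by (simp only: mult_less_cancel_right_pos)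
  qed
  then obtain C where C: "\<And>k a b. \<bar>matrix_pow ((1 / r) *\<^sub>R F) k $ a $ b\<bar> \<le> C"
    using matrix_pow_bounded by blast
  have "\<bar>matrix_pow F k $ a $ b\<bar> \<le> C * r ^ k" for k a b
  proof -
    have "matrix_pow F k = r ^ k *\<^sub>R matrix_pow ((1 / r) *\<^sub>R F) k"
      using r by (simp add: matrix_pow_scaleR power_one_over)
    then have "\<bar>matrix_pow F k $ a $ b\<bar> = r ^ k * \<bar>matrix_pow ((1 / r) *\<^sub>R F) k $ a $ b\<bar>"
      using r by (simp add: abs_mult)
    also have "\<dots> \<le> C * r ^ k"
      using C r by (simp add: mult.commute mult_left_mono)
    finally show ?thesis .
  qed
  then show ?thesis
    using r(1,2) by blast
qed

section \<open>Linear recurrences\<close>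

lemma LIMSEQ_poly_mult_power_zero:
  fixes g :: real
  assumes g: "0 \<le> g" "g < 1"
  shows "(\<lambda>k. real k ^ d * g ^ k) \<longlonglongrightarrow> 0"
proof (cases "d = 0")
  case True
  then show ?thesis
    using g by (simp add: LIMSEQ_power_zero)
next
  case False
  define h where "h = root d g"
  have h: "0 \<le> h" "h < 1" "h ^ d = g"
    using g False by (auto simp: h_def real_root_pow_pos2 real_root_lt_1_iff)
  have "(\<lambda>k. (real k * h ^ k) ^ d) \<longlonglongrightarrow> 0 ^ d"
    using powser_times_n_limit_0[of h] h by (intro tendsto_power) simp
  moreover have "(real k * h ^ k) ^ d = real k ^ d * g ^ k" for k
    using h(3) by (simp add: power_mult_distrib power_mult[symmetric] mult.commute[of k d] power_mult)
  ultimately show ?thesis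
    using False by (simp add: zero_power)
qed

lemma linear_recurrence_solution:
  fixes F :: "real^'n^'n"
  assumes rec: "\<And>k. \<delta> (Suc k) = F *v \<delta> k + w k"
  shows "\<delta> (k + k0) = matrix_pow F k *v \<delta> k0 + (\<Sum>t<k. matrix_pow F (k - Suc t) *v w (t + k0))"
proof (induction k)
  case 0
  then show ?case by simp
next
  case (Suc k)
  have "\<delta> (Suc k + k0) = F *v \<delta> (k + k0) + w (k + k0)"
    using rec by simp
  also have "\<dots> = matrix_pow F (Suc k) *v \<delta> k0
      + (\<Sum>t<k. matrix_pow F (Suc k - Suc t) *v w (t + k0)) + w (k + k0)"
    unfolding Suc
    by (simp add: matrix_vector_right_distrib matrix_vector_mult_sum matrix_vector_mul_assoc
        Suc_diff_Suc flip: matrix_pow_Suc_left del: matrix_pow.simps(2))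
  also have "\<dots> = matrix_pow F (Suc k) *v \<delta> k0
      + (\<Sum>t<Suc k. matrix_pow F (Suc k - Suc t) *v w (t + k0))"
    by (simp only: sum.lessThan_Suc diff_self_eq_0 matrix_pow.simps(1) matrix_vector_mul_lid add.assoc)
  finally show ?case .
qed

lemma LIMSEQ_null_poly_mult_power_bound:
  fixes f :: "nat \<Rightarrow> 'a::real_normed_vector" and g :: real
  assumes g: "0 \<le> g" "g < 1" and bound: "\<And>k. norm (f k) \<le> (c1 + c2 * real k ^ d) * g ^ k"
  shows "f \<longlonglongrightarrow> 0"
proof -
  have "(\<lambda>k. c1 * g ^ k + c2 * (real k ^ d * g ^ k)) \<longlonglongrightarrow> 0"
    using g LIMSEQ_poly_mult_power_zero[OF g]
    by (intro tendsto_add_zero tendsto_mult_right_zero LIMSEQ_power_zero) simp_all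
  moreover have "norm (f k) \<le> c1 * g ^ k + c2 * (real k ^ d * g ^ k)" for k
    using bound[of k] by (simp add: algebra_simps)
  ultimately show ?thesis
    by (rule Lim_null_comparison[OF always_eventually[OF allI], rotated])
qed

lemma schur_stable_norm_matrix_pow_le:
  assumes "schur_stable (F :: real^'n^'n)"
  shows "\<exists>M r. 0 \<le> M \<and> 0 < r \<and> r < 1 \<and>
    (\<forall>j v. norm (matrix_pow F j *v v) \<le> M * r ^ j * norm v)"
proof -
  obtain C r where r: "0 < r" "r < 1" and C: "\<And>k a b. \<bar>matrix_pow F k $ a $ b\<bar> \<le> C * r ^ k"
    using schur_stable_matrix_pow_decay[OF assms] by blast
  define M where "M = real CARD('n) * real CARD('n) * C"
  have "0 \<le> C"
    using order_trans[OF abs_ge_zero C[of 0]] by simp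
  then have "0 \<le> M"
    by (simp add: M_def)
  moreover have "norm (matrix_pow F j *v v) \<le> M * r ^ j * norm v" for j v
    using norm_matrix_vector_le[of "matrix_pow F j" "C * r ^ j" v] C by (simp add: M_def mult.assoc)
  ultimately show ?thesis
    using r by blast
qed

lemma norm_matrix_pow_convolution_le:
  fixes F :: "real^'n^'n" and w :: "nat \<Rightarrow> real^'n"
  assumes pow: "\<And>j v. norm (matrix_pow F j *v v) \<le> M * r ^ j * norm v"
    and M: "0 \<le> M" and r: "0 \<le> r" "r < 1" and w: "\<And>t. norm (w t) \<le> \<eta>"
  shows "norm (\<Sum>t<k. matrix_pow F (k - Suc t) *v w t) \<le> M * \<eta> / (1 - r)"
proof -
  have "0 \<le> \<eta>"
    using order_trans[OF norm_ge_zero w] .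
  have "norm (\<Sum>t<k. matrix_pow F (k - Suc t) *v w t) \<le> (\<Sum>t<k. norm (matrix_pow F (k - Suc t) *v w t))"
    by (rule norm_sum)
  also have "\<dots> \<le> (\<Sum>t<k. M * \<eta> * r ^ (k - Suc t))"
  proof (rule sum_mono)
    fix t
    have "norm (matrix_pow F (k - Suc t) *v w t) \<le> M * r ^ (k - Suc t) * norm (w t)"
      by (rule pow)
    also have "\<dots> \<le> M * r ^ (k - Suc t) * \<eta>"
      using w[of t] M r by (intro mult_left_mono) auto
    finally show "norm (matrix_pow F (k - Suc t) *v w t) \<le> M * \<eta> * r ^ (k - Suc t)"
      by (simp add: mult_ac)
  qed
  also have "\<dots> = M * \<eta> * (\<Sum>s<k. r ^ s)"
    by (simp add: sum_distrib_left[symmetric] sum.nat_diff_reindex[where g = "\<lambda>s. r ^ s"])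
  also have "\<dots> \<le> M * \<eta> * (1 / (1 - r))"
    using sum_gp_strict[of r k] r M \<open>0 \<le> \<eta>\<close> by (intro mult_left_mono) (auto simp: divide_right_mono)
  finally show ?thesis
    by simp
qed

text \<open>Restart at a time \<open>k0\<close> after which the input stays below \<open>\<eta>\<close>: the free response decays
  geometrically and the forced response stays below \<open>M \<eta> / (1 - r)\<close>.\<close>
lemma schur_stable_input_to_state:
  fixes F :: "real^'n^'n" and \<delta> w :: "nat \<Rightarrow> real^'n"
  assumes F: "schur_stable F" and rec: "\<And>k. \<delta> (Suc k) = F *v \<delta> k + w k" and w: "w \<longlonglongrightarrow> 0"
  shows "\<delta> \<longlonglongrightarrow> 0"
proof (rule tendstoI)
  fix \<epsilon> :: real assume \<epsilon>: "0 < \<epsilon>"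
  obtain M r where M: "0 \<le> M" and r: "0 < r" "r < 1"
    and pow: "\<And>j v. norm (matrix_pow F j *v v) \<le> M * r ^ j * norm v"
    using schur_stable_norm_matrix_pow_le[OF F] by blast
  define \<eta> where "\<eta> = \<epsilon> * (1 - r) / (2 * (M + 1))"
  have "0 < \<eta>"
    using \<epsilon> r M by (simp add: \<eta>_def)
  then obtain k0 where k0: "\<And>t. k0 \<le> t \<Longrightarrow> norm (w t) < \<eta>"
    using LIMSEQ_D[OF w] by auto
  have "M * \<eta> \<le> (M + 1) * \<eta>"
    using \<open>0 < \<eta>\<close> by simp
  also have "\<dots> = \<epsilon> / 2 * (1 - r)"
    using M by (simp add: \<eta>_def field_simps)
  finally have M\<eta>: "M * \<eta> / (1 - r) \<le> \<epsilon> / 2"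
    using r by (simp add: pos_divide_le_eq)
  have "norm (w (t + k0)) \<le> \<eta>" for t
    using k0[of "t + k0"] by simp
  then have tail: "norm (\<Sum>t<k. matrix_pow F (k - Suc t) *v w (t + k0)) \<le> \<epsilon> / 2" for k
    using norm_matrix_pow_convolution_le[OF pow M less_imp_le[OF r(1)] r(2)] M\<eta> by (meson order_trans)
  have "(\<lambda>k. M * r ^ k * norm (\<delta> k0)) \<longlonglongrightarrow> 0"
    using r by (intro tendsto_mult_right_zero tendsto_mult_left_zero LIMSEQ_power_zero) simp
  then have "eventually (\<lambda>k. M * r ^ k * norm (\<delta> k0) < \<epsilon> / 2) sequentially"
    using order_tendstoD(2)[OF _ half_gt_zero[OF \<epsilon>]] by blast
  then have "eventually (\<lambda>k. dist (\<delta> (k + k0)) 0 < \<epsilon>) sequentially"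
  proof eventually_elim
    case (elim k)
    have "norm (\<delta> (k + k0))
        \<le> norm (matrix_pow F k *v \<delta> k0) + norm (\<Sum>t<k. matrix_pow F (k - Suc t) *v w (t + k0))"
      unfolding linear_recurrence_solution[where \<delta> = \<delta> and w = w, OF rec, of k k0]
      by (rule norm_triangle_ineq)
    then have "norm (\<delta> (k + k0)) < \<epsilon>"
      using pow[of k "\<delta> k0"] tail[of k] elim by linarith
    then show ?case
      by simp
  qed
  then show "eventually (\<lambda>k. dist (\<delta> k) 0 < \<epsilon>) sequentially"
    by (rule eventually_sequentially_seg[THEN iffD1])
qed

lemma networked_recurrence_solution:
  fixes A :: "real^'n^'n" and e :: "nat \<Rightarrow> nat \<Rightarrow> real^'n"
  assumes rec: "\<And>i k. i < N \<Longrightarrow> e i (Suc k) = A *v (\<Sum>j<N. P i j *\<^sub>R e j k)"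
  shows "i < N \<Longrightarrow> e i k = matrix_pow A k *v (\<Sum>l<N. mat_fun_pow N P k i l *\<^sub>R e l 0)"
proof (induction k arbitrary: i)
  case 0
  have "(\<Sum>l<N. mat_fun_pow N P 0 i l *\<^sub>R e l 0) = (\<Sum>l<N. if i = l then e l 0 else 0)"
    by (intro sum.cong) auto
  then show ?case
    using 0 by simp
next
  case (Suc k)
  have "e i (Suc k)
      = A *v (\<Sum>j<N. P i j *\<^sub>R (matrix_pow A k *v (\<Sum>l<N. mat_fun_pow N P k j l *\<^sub>R e l 0)))"
    using rec[OF Suc.prems] Suc.IH by simp
  also have "\<dots> = matrix_pow A (Suc k) *v (\<Sum>j<N. \<Sum>l<N. (P i j * mat_fun_pow N P k j l) *\<^sub>R e l 0)"
    by (simp add: matrix_vector_mult_sum matrix_vector_mult_scaleR matrix_vector_mul_assoc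
        scaleR_sum_right flip: matrix_pow_Suc_left del: matrix_pow.simps(2))
  also have "(\<Sum>j<N. \<Sum>l<N. (P i j * mat_fun_pow N P k j l) *\<^sub>R e l 0)
      = (\<Sum>l<N. mat_fun_pow N P (Suc k) i l *\<^sub>R e l 0)"
    by (subst sum.swap) (simp add: scaleR_sum_left)
  finally show ?case .
qed

text \<open>The disagreement of two agents is \<open>A ^ k\<close>, growing at most polynomially, applied to a
  combination of initial states whose coefficients are differences of two rows of \<open>P ^ k\<close>,
  decaying geometrically.\<close>
lemma networked_recurrence_agreement:
  fixes A :: "real^'n^'n" and e :: "nat \<Rightarrow> nat \<Rightarrow> real^'n"
  assumes A: "eigs_in_closed_disc A"
    and P: "row_stochastic N P" "\<And>i. i < N \<Longrightarrow> 0 < P i i" "has_spanning_tree N P"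
    and rec: "\<And>i k. i < N \<Longrightarrow> e i (Suc k) = A *v (\<Sum>j<N. P i j *\<^sub>R e j k)"
    and ij: "i < N" "j < N"
  shows "(\<lambda>k. e i k - e j k) \<longlonglongrightarrow> 0"
proof -
  obtain c1 c2 d where pow: "\<And>k a b. \<bar>matrix_pow A k $ a $ b\<bar> \<le> c1 + c2 * real k ^ d"
    using matrix_pow_poly_bound[OF A] by blast
  obtain C g where g: "0 \<le> g" "g < 1" and close: "\<And>k i j l. i < N \<Longrightarrow> j < N \<Longrightarrow>
      \<bar>mat_fun_pow N P k i l - mat_fun_pow N P k j l\<bar> \<le> C * g ^ k"
    using mat_fun_pow_consensus[OF P] by blast
  define E where "E = (\<Sum>l<N. norm (e l 0))"
  define M where "M = real CARD('n) * real CARD('n)"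
  have sol: "e l k = matrix_pow A k *v (\<Sum>l'<N. mat_fun_pow N P k l l' *\<^sub>R e l' 0)"
    if "l < N" for l k
    using rec that by (rule networked_recurrence_solution)
  have "norm (e i k - e j k) \<le> (M * C * E * c1 + M * C * E * c2 * real k ^ d) * g ^ k" for k
  proof -
    define v where "v = (\<Sum>l<N. (mat_fun_pow N P k i l - mat_fun_pow N P k j l) *\<^sub>R e l 0)"
    have "e i k - e j k = matrix_pow A k *v v"
      unfolding sol[OF ij(1)] sol[OF ij(2)]
      by (simp add: v_def matrix_vector_mult_diff_distrib scaleR_diff_left sum_subtractf)
    then have "norm (e i k - e j k) \<le> M * (c1 + c2 * real k ^ d) * norm v"
      unfolding M_def by (simp only: norm_matrix_vector_le[OF pow])
    also have "\<dots> \<le> M * (c1 + c2 * real k ^ d) * (C * g ^ k * E)"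
    proof (rule mult_left_mono)
      show "norm v \<le> C * g ^ k * E"
        unfolding v_def E_def sum_distrib_left
        using close[OF ij] by (intro order_trans[OF norm_sum] sum_mono) (simp add: mult_right_mono)
      have "0 \<le> c1 + c2 * real k ^ d"
        using order_trans[OF abs_ge_zero pow[of k]] .
      then show "0 \<le> M * (c1 + c2 * real k ^ d)"
        by (simp add: M_def)
    qed
    also have "\<dots> = (M * C * E * c1 + M * C * E * c2 * real k ^ d) * g ^ k"
      by (simp add: algebra_simps)
    finally show ?thesis .
  qed
  then show ?thesis
    by (rule LIMSEQ_null_poly_mult_power_bound[OF g])
qed

section \<open>The protocol\<close>

lemma protocol_error_recurrence:
  fixes A :: "real^'n^'n" and B :: "real^'m^'n"
  assumes a: "weighted_graph N a" and i: "i < N"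
    and x: "x i (Suc k) = A *v x i k + B *v u i k"
    and eta: "eta i (Suc k) = A *v eta i k + B *v u i k
            + A *v (\<Sum>j<N. dmat N a i j *\<^sub>R (x i k - x j k))
            - A *v (\<Sum>j<N. dmat N a i j *\<^sub>R (eta i k - eta j k))"
  shows "x i (Suc k) - eta i (Suc k) = A *v (\<Sum>j<N. dmat N a i j *\<^sub>R (x j k - eta j k))"
proof -
  let ?e = "\<lambda>j. x j k - eta j k"
  have "(\<Sum>j<N. dmat N a i j *\<^sub>R (x i k - x j k)) - (\<Sum>j<N. dmat N a i j *\<^sub>R (eta i k - eta j k))
      = (\<Sum>j<N. dmat N a i j *\<^sub>R ?e i - dmat N a i j *\<^sub>R ?e j)"
    unfolding sum_subtractf[symmetric] by (intro sum.cong) (simp_all add: algebra_simps)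
  also have "\<dots> = (\<Sum>j<N. dmat N a i j) *\<^sub>R ?e i - (\<Sum>j<N. dmat N a i j *\<^sub>R ?e j)"
    by (simp add: sum_subtractf scaleR_sum_left)
  also have "\<dots> = ?e i - (\<Sum>j<N. dmat N a i j *\<^sub>R ?e j)"
    using row_stochastic_dmat[OF a] i by (simp add: row_stochastic_def)
  finally have coupling: "(\<Sum>j<N. dmat N a i j *\<^sub>R (x i k - x j k))
      - (\<Sum>j<N. dmat N a i j *\<^sub>R (eta i k - eta j k)) = ?e i - (\<Sum>j<N. dmat N a i j *\<^sub>R ?e j)" .
  have "x i (Suc k) - eta i (Suc k) = A *v ?e i - A *v (?e i - (\<Sum>j<N. dmat N a i j *\<^sub>R ?e j))"
    unfolding x eta coupling[symmetric] by (simp add: matrix_vector_mult_diff_distrib)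
  then show ?thesis
    by (simp add: matrix_vector_mult_diff_distrib)
qed

lemma protocol_disagreement_recurrence:
  fixes A :: "real^'n^'n" and B :: "real^'m^'n" and K :: "real^'n^'m"
  assumes u: "\<And>l. l \<in> {i, j} \<Longrightarrow> u l k = - (K *v eta l k)"
    and x: "\<And>l. l \<in> {i, j} \<Longrightarrow> x l (Suc k) = A *v x l k + B *v u l k"
  shows "x i (Suc k) - x j (Suc k)
    = (A - B ** K) *v (x i k - x j k) + (B ** K) *v ((x i k - eta i k) - (x j k - eta j k))"
proof -
  have closed_loop: "x l (Suc k) = (A - B ** K) *v x l k + (B ** K) *v (x l k - eta l k)"
    if "l \<in> {i, j}" for l
    using x[OF that] u[OF that]
    by (simp add: matrix_vector_mult_diff_rdistrib matrix_vector_mult_diff_distrib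
        matrix_vector_mul_assoc[symmetric] linear_neg[OF matrix_vector_mul_linear])
  show ?thesis
    using closed_loop[of i] closed_loop[of j] by (simp add: algebra_simps)
qed

theorem theorem1:
  fixes A :: "real^'n^'n" and B :: "real^'m^'n" and K :: "real^'n^'m"
    and N :: nat and a :: "nat \<Rightarrow> nat \<Rightarrow> real"
    and x eta :: "nat \<Rightarrow> nat \<Rightarrow> real^'n" and u :: "nat \<Rightarrow> nat \<Rightarrow> real^'m"
  assumes "N \<ge> 2"
    and "eigs_in_closed_disc A"
    and "stabilizable A B"
    and "schur_stable (A - B ** K)"
    and "weighted_graph N a"
    and "has_spanning_tree N a"
    and "\<And>i k. i < N \<Longrightarrow> u i k = - (K *v eta i k)"
    and "\<And>i k. i < N \<Longrightarrow> x i (Suc k) = A *v x i k + B *v u i k"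
    and "\<And>i k. i < N \<Longrightarrow> eta i (Suc k) =
            A *v eta i k + B *v u i k
            + A *v (\<Sum>j<N. dmat N a i j *\<^sub>R (x i k - x j k))
            - A *v (\<Sum>j<N. dmat N a i j *\<^sub>R (eta i k - eta j k))"
  shows "\<forall>i<N. \<forall>j<N. (\<lambda>k. x i k - x j k) \<longlonglongrightarrow> 0"
proof (intro allI impI)
  note A = assms(2) and AK = assms(4) and a = assms(5,6) and u = assms(7) and x = assms(8)
    and eta = assms(9)
  fix i j assume ij: "i < N" "j < N"
  have error: "x l (Suc k) - eta l (Suc k) = A *v (\<Sum>j<N. dmat N a l j *\<^sub>R (x j k - eta j k))"
    if "l < N" for l k
    using a(1) that x[OF that] eta[OF that] by (rule protocol_error_recurrence)
  have "(\<lambda>k. (x i k - eta i k) - (x j k - eta j k)) \<longlonglongrightarrow> 0"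
    by (rule networked_recurrence_agreement[where e = "\<lambda>l k. x l k - eta l k", OF A
          row_stochastic_dmat[OF a(1)] dmat_diag_pos[OF a(1)] has_spanning_tree_dmat[OF a] error ij])
  then have input: "(\<lambda>k. (B ** K) *v ((x i k - eta i k) - (x j k - eta j k))) \<longlonglongrightarrow> 0"
    by (rule bounded_linear.tendsto_zero[OF matrix_vector_mul_bounded_linear])
  have "x i (Suc k) - x j (Suc k)
      = (A - B ** K) *v (x i k - x j k) + (B ** K) *v ((x i k - eta i k) - (x j k - eta j k))" for k
    by (rule protocol_disagreement_recurrence) (use u x ij in auto)
  then show "(\<lambda>k. x i k - x j k) \<longlonglongrightarrow> 0"
    by (rule schur_stable_input_to_state[where \<delta> = "\<lambda>k. x i k - x j k", OF AK _ input])
qed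

end
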